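(* For a graphical sequence $\pi$ of length $n$ define $h(\pi)=g(\overline{\pi})$. Then: (i) every realization $G$ of $\pi$ satisfies $\chi(G)\ge\omega(G)\ge h(\pi)$; (ii) $h$ is monotone increasing: if $\pi\le\pi'$ termwise (both graphical of length $n$) then $h(\pi)\le h(\pi')$; (iii) there is a graphical sequence $\pi'\ge\pi$ (termwise) of length $n$ having a realization that is a complete $h(\pi)$-partite graph, so that $\omega$ and $\chi$ of this realization both equal $h(\pi)$.
   Context: Graphs are finite and simple; a graphical sequence is a nondecreasing integer sequence that is the degree sequence of some graph (a realization). For $\pi=(d_1\le\cdots\le d_n)$, $\overline{\pi}=((n-1)-d_n\le\cdots\le(n-1)-d_1)$ is the complementary sequence. For a graphical sequence $(e_1\le\cdots\le e_n)$ define $f(1)=e_1$ with index $j_1=1$; if $f(i)=e_{j_i}$ is finite and $j_i+f(i)+1\le n$ set $j_{i+1}=j_i+f(i)+1$, $f(i+1)=e_{j_{i+1}}$, otherwise $f(i+1)=\infty$; once $\infty$, it stays $\infty$. Let $g$ of that sequence be $\max\{i\in\mathbb{Z}^+: f(i)<\infty\}$. It is known (Murphy) that every realization of a graphical sequence $\sigma$ has independence number at least $g(\sigma)$. $\omega$ is clique number and $\chi$ chromatic number. *)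

theory Defs
  imports Main
begin

definition simple_graph :: "nat \<Rightarrow> (nat \<Rightarrow> nat \<Rightarrow> bool) \<Rightarrow> bool" where
  "simple_graph n E \<longleftrightarrow> (\<forall>u v. E u v \<longrightarrow> u < n \<and> v < n \<and> u \<noteq> v \<and> E v u)"

definition deg :: "nat \<Rightarrow> (nat \<Rightarrow> nat \<Rightarrow> bool) \<Rightarrow> nat \<Rightarrow> nat" where
  "deg n E v = card {u. u < n \<and> E v u}"

text \<open>E realizes the sequence pi: vertex i has degree pi!i (vertices labelled in
  the order of the sorted degree sequence).\<close>
definition realization :: "nat list \<Rightarrow> (nat \<Rightarrow> nat \<Rightarrow> bool) \<Rightarrow> bool" where
  "realization pi E \<longleftrightarrow> simple_graph (length pi) E \<and>
     (\<forall>i < length pi. deg (length pi) E i = pi ! i)"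

definition graphical :: "nat list \<Rightarrow> bool" where
  "graphical pi \<longleftrightarrow> sorted pi \<and> (\<exists>E. realization pi E)"

definition compl_seq :: "nat list \<Rightarrow> nat list" where
  "compl_seq pi = rev (map (\<lambda>d. (length pi - 1) - d) pi)"

text \<open>Murphy's greedy count: g_aux e j counts the indices j_i (0-based) visited,
  starting at j, jumping from j to j + e!j + 1 while j < length e.\<close>
function g_aux :: "nat list \<Rightarrow> nat \<Rightarrow> nat" where
  "g_aux e j = (if j < length e then Suc (g_aux e (j + e ! j + 1)) else 0)"
  by auto
termination by (relation "measure (\<lambda>(e, j). length e - j)") auto

definition g :: "nat list \<Rightarrow> nat" where
  "g e = g_aux e 0"

definition h :: "nat list \<Rightarrow> nat" where
  "h pi = g (compl_seq pi)"

definition is_clique :: "(nat \<Rightarrow> nat \<Rightarrow> bool) \<Rightarrow> nat set \<Rightarrow> bool" where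
  "is_clique E K \<longleftrightarrow> (\<forall>u\<in>K. \<forall>v\<in>K. u \<noteq> v \<longrightarrow> E u v)"

definition clique_number :: "nat \<Rightarrow> (nat \<Rightarrow> nat \<Rightarrow> bool) \<Rightarrow> nat" where
  "clique_number n E = Max {card K | K. K \<subseteq> {0..<n} \<and> is_clique E K}"

definition proper_colouring :: "nat \<Rightarrow> (nat \<Rightarrow> nat \<Rightarrow> bool) \<Rightarrow> nat \<Rightarrow> (nat \<Rightarrow> nat) \<Rightarrow> bool" where
  "proper_colouring n E k c \<longleftrightarrow> (\<forall>v < n. c v < k) \<and>
     (\<forall>u < n. \<forall>v < n. E u v \<longrightarrow> c u \<noteq> c v)"

definition chromatic_number :: "nat \<Rightarrow> (nat \<Rightarrow> nat \<Rightarrow> bool) \<Rightarrow> nat" where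
  "chromatic_number n E = (LEAST k. \<exists>c. proper_colouring n E k c)"

definition complete_multipartite :: "nat \<Rightarrow> (nat \<Rightarrow> nat \<Rightarrow> bool) \<Rightarrow> nat \<Rightarrow> bool" where
  "complete_multipartite n E k \<longleftrightarrow> (\<exists>p. (\<forall>v < n. p v < k) \<and>
     (\<forall>i < k. \<exists>v < n. p v = i) \<and>
     (\<forall>u v. E u v \<longleftrightarrow> u < n \<and> v < n \<and> p u \<noteq> p v))"

end

theory Submission
  imports Defs
begin

(* Write e = compl_seq pi, n = length pi, and let h pi = g e be Murphy's greedy
   count on the complementary sequence.
   (i)  A proper colouring injects every clique into its colour set, so omega <= chi.  For
        omega >= h pi, run Murphy's greedy argument inside the graph itself: a candidate set S
        of at least n - j vertices contains a vertex i of index >= n-1-j; since pi is sorted,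
        i has at most e!j non-neighbours, so removing i and its non-neighbours leaves at least
        n - (j + e!j + 1) common neighbours, in which we recurse from index j + e!j + 1.
   (ii) Raising pi lowers e termwise, and then the greedy jumps of g over the smaller sequence
        never overtake those over the larger one.
   (iii) The greedy jumps cut the positions 0..<n into g e consecutive blocks, the block
        starting at a having size at most e!a + 1.  Re-sorting the blocks by size preserves
        this bound, and the complete multipartite graph with these blocks as parts, vertex v
        placed at position n-1-v, has sorted degree sequence pi' with pi'!v = n - size of the
        part of v >= pi!v.  The clique and chromatic numbers of a complete k-partite graph
        are both k. *)

lemma g_aux_stop: "\<not> j < length e \<Longrightarrow> g_aux e j = 0"
  by (subst g_aux.simps) simp

lemma g_aux_step: "j < length e \<Longrightarrow> g_aux e j = Suc (g_aux e (j + e ! j + 1))"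
  by (subst g_aux.simps) simp

declare g_aux.simps [simp del]

section \<open>Clique number and chromatic number\<close>

lemma clique_sizes_finite: "finite {card K | K. K \<subseteq> {0..<n} \<and> is_clique E K}"
proof (rule finite_subset[of _ "{0..n}"])
  show "{card K | K. K \<subseteq> {0..<n} \<and> is_clique E K} \<subseteq> {0..n}"
    using card_mono[of "{0..<n}"] by fastforce
qed simp

lemma card_le_clique_number:
  "K \<subseteq> {0..<n} \<Longrightarrow> is_clique E K \<Longrightarrow> card K \<le> clique_number n E"
  unfolding clique_number_def by (rule Max_ge[OF clique_sizes_finite]) auto

lemma clique_number_le:
  "(\<And>K. K \<subseteq> {0..<n} \<Longrightarrow> is_clique E K \<Longrightarrow> card K \<le> m) \<Longrightarrow> clique_number n E \<le> m"
  unfolding clique_number_def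
  by (subst Max_le_iff[OF clique_sizes_finite]) (auto intro!: exI[of _ "{}"] simp: is_clique_def)

text \<open>A proper k-colouring is injective on every clique, so cliques have at most k vertices.\<close>
lemma clique_le_colours:
  assumes c: "proper_colouring n E k c" and K: "K \<subseteq> {0..<n}" "is_clique E K"
  shows "card K \<le> k"
proof -
  have "inj_on c K"
    using c K unfolding inj_on_def proper_colouring_def is_clique_def
    by (meson atLeastLessThan_iff subsetD)
  then have "card K = card (c ` K)" by (simp add: card_image)
  also have "\<dots> \<le> card {0..<k}"
    using c K by (intro card_mono) (auto simp: proper_colouring_def)
  finally show ?thesis by simp
qed

lemma chromatic_number_le: "proper_colouring n E k c \<Longrightarrow> chromatic_number n E \<le> k"
  unfolding chromatic_number_def by (rule Least_le) blast

lemma clique_number_le_chromatic: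
  assumes "proper_colouring n E k c"
  shows "clique_number n E \<le> chromatic_number n E"
proof -
  have "\<exists>c. proper_colouring n E (chromatic_number n E) c"
    unfolding chromatic_number_def
    by (rule LeastI_ex[of "\<lambda>k. \<exists>c. proper_colouring n E k c"]) (use assms in blast)
  then obtain c' where "proper_colouring n E (chromatic_number n E) c'" ..
  then show ?thesis by (intro clique_number_le) (rule clique_le_colours)
qed

lemma realization_identity_colouring:
  "realization pi E \<Longrightarrow> proper_colouring (length pi) E (length pi) id"
  unfolding realization_def simple_graph_def proper_colouring_def by auto

text \<open>A complete k-partite graph has a k-clique (one vertex per part) and is properly
  coloured by its parts.\<close>
lemma complete_multipartite_numbers:
  assumes "complete_multipartite n E k"
  shows "clique_number n E = k" and "chromatic_number n E = k"
proof -
  obtain p where p_lt: "\<forall>v<n. p v < k" and p_onto: "\<forall>i<k. \<exists>v<n. p v = i"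
    and adj: "\<forall>u v. E u v \<longleftrightarrow> u < n \<and> v < n \<and> p u \<noteq> p v"
    using assms unfolding complete_multipartite_def by blast
  obtain r where r: "\<And>i. i < k \<Longrightarrow> r i < n \<and> p (r i) = i"
    using p_onto by metis
  have "inj_on r {0..<k}" using r unfolding inj_on_def by (metis atLeastLessThan_iff)
  then have "card (r ` {0..<k}) = k" by (simp add: card_image)
  moreover have "r ` {0..<k} \<subseteq> {0..<n}" using r by auto
  moreover have "is_clique E (r ` {0..<k})" unfolding is_clique_def using r adj by auto
  ultimately have "k \<le> clique_number n E" by (metis card_le_clique_number)
  moreover have parts: "proper_colouring n E k p"
    using p_lt adj unfolding proper_colouring_def by auto
  ultimately show "clique_number n E = k" "chromatic_number n E = k"
    using chromatic_number_le[OF parts] clique_number_le_chromatic[OF parts] by simp_all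
qed

lemma length_compl_seq [simp]: "length (compl_seq pi) = length pi"
  by (simp add: compl_seq_def)

lemma compl_seq_nth:
  "t < length pi \<Longrightarrow> compl_seq pi ! t = (length pi - 1) - pi ! (length pi - 1 - t)"
  unfolding compl_seq_def by (simp add: rev_nth)

lemma compl_seq_sorted:
  assumes "sorted pi"
  shows "sorted (compl_seq pi)"
  unfolding sorted_iff_nth_mono length_compl_seq
  using assms by (auto simp: compl_seq_nth intro!: diff_le_mono2 sorted_nth_mono)

lemma realization_degree_le:
  assumes R: "realization pi E" and v: "v < length pi"
  shows "pi ! v \<le> length pi - 1"
proof -
  have "pi ! v = card {u. u < length pi \<and> E v u}"
    using R v unfolding realization_def deg_def by auto
  also have "\<dots> \<le> card ({0..<length pi} - {v})"
    using R unfolding realization_def simple_graph_def by (intro card_mono) auto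
  finally show ?thesis using v by simp
qed

lemma realization_non_neighbours:
  assumes R: "realization pi E" and i: "i < length pi"
  shows "card {u. u < length pi \<and> u \<noteq> i \<and> \<not> E i u} = length pi - 1 - pi ! i"
proof -
  let ?n = "length pi" and ?N = "{u. u < length pi \<and> E i u}"
    and ?NN = "{u. u < length pi \<and> u \<noteq> i \<and> \<not> E i u}"
  have "{0..<?n} - {i} = ?N \<union> ?NN"
    using R unfolding realization_def simple_graph_def by auto
  moreover have "card (?N \<union> ?NN) = card ?N + card ?NN" by (rule card_Un_disjoint) auto
  ultimately have "card ({0..<?n} - {i}) = card ?N + card ?NN" by simp
  moreover have "card ?N = pi ! i"
    using R i unfolding realization_def deg_def by auto
  ultimately show ?thesis using i by simp
qed

section \<open>Murphy's bound inside the graph: omega >= h pi\<close>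

lemma large_element:
  assumes S: "S \<subseteq> {0..<n}" and card: "n - j \<le> card S" and j: "j < n"
  shows "\<exists>i\<in>S. n - 1 - j \<le> i"
proof (rule ccontr)
  assume "\<not> ?thesis"
  then have "S \<subseteq> {0..<n - 1 - j}" using S by auto
  then have "card S \<le> n - 1 - j" using card_mono[of "{0..<n - 1 - j}" S] by simp
  then show False using card j by linarith
qed

text \<open>The counting step of the greedy argument: a vertex i of index >= n-1-j has at most
  e!j non-neighbours (pi is sorted), so it keeps at least n - (j + e!j + 1) neighbours
  inside any set S of at least n - j vertices.\<close>
lemma many_neighbours:
  assumes R: "realization pi E" and sorted: "sorted pi"
    and S: "S \<subseteq> {0..<length pi}" "length pi - j \<le> card S"
    and i: "i \<in> S" "length pi - 1 - j \<le> i" and j: "j < length pi"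
  shows "length pi - (j + compl_seq pi ! j + 1) \<le> card {u \<in> S. E i u}"
proof -
  let ?n = "length pi" and ?S' = "{u \<in> S. E i u}"
  define NN where "NN = {u. u < ?n \<and> u \<noteq> i \<and> \<not> E i u}"
  have i_lt: "i < ?n" using i S by auto
  have "pi ! (?n - 1 - j) \<le> pi ! i" using sorted i i_lt by (simp add: sorted_nth_mono)
  then have few_non_nbrs: "card NN \<le> compl_seq pi ! j"
    using realization_non_neighbours[OF R i_lt] j by (simp add: NN_def compl_seq_nth)
  have "?S' \<subseteq> {0..<?n}" "NN \<subseteq> {0..<?n}" using S(1) by (auto simp: NN_def)
  then have fin: "finite ?S'" "finite NN" by (simp_all add: finite_subset)
  have "S \<subseteq> insert i (?S' \<union> NN)" using S(1) unfolding NN_def by auto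
  then have "card S \<le> card (insert i (?S' \<union> NN))" using fin by (intro card_mono) auto
  also have "\<dots> \<le> Suc (card ?S' + card NN)"
    using fin card_Un_le[of ?S' NN] by (simp add: card_insert_if)
  finally show ?thesis using S(2) few_non_nbrs by linarith
qed

text \<open>Murphy's greedy argument run inside a realization: from a candidate set of size >= n-j
  pick a vertex i of index >= n-1-j, keep its neighbours and recurse from index j + e!j + 1;
  this yields a clique of size g_aux e j.\<close>
lemma greedy_clique:
  assumes R: "realization pi E" and sorted: "sorted pi"
  shows "S \<subseteq> {0..<length pi} \<Longrightarrow> length pi - j \<le> card S \<Longrightarrow>
     \<exists>K \<subseteq> S. is_clique E K \<and> g_aux (compl_seq pi) j \<le> card K"
proof (induction "length pi - j" arbitrary: j S rule: less_induct)
  case less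
  let ?n = "length pi" and ?e = "compl_seq pi"
  show ?case
  proof (cases "j < ?n")
    case False
    then show ?thesis by (intro exI[of _ "{}"]) (auto simp: g_aux_stop is_clique_def)
  next
    case j: True
    obtain i where i: "i \<in> S" "?n - 1 - j \<le> i"
      using large_element[OF less.prems j] by blast
    have sg: "simple_graph ?n E" using R by (simp add: realization_def)
    define S' where "S' = {u \<in> S. E i u}"
    have big: "?n - (j + ?e ! j + 1) \<le> card S'"
      unfolding S'_def using many_neighbours[OF R sorted less.prems i j] .
    have S'_sub: "S' \<subseteq> {0..<?n}" using less.prems(1) unfolding S'_def by auto
    have shorter: "?n - (j + ?e ! j + 1) < ?n - j" using j by simp
    obtain K' where K': "K' \<subseteq> S'" "is_clique E K'" "g_aux ?e (j + ?e ! j + 1) \<le> card K'"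
      using less.hyps[OF shorter S'_sub big] by blast
    have no_loop: "\<not> E i i" and sym: "\<And>u. E i u \<Longrightarrow> E u i"
      using sg unfolding simple_graph_def by blast+
    have "i \<notin> K'" using K'(1) no_loop by (auto simp: S'_def)
    moreover have "finite K'" using K'(1) S'_sub by (meson finite_atLeastLessThan finite_subset)
    moreover have "is_clique E (insert i K')"
      using K'(1,2) sym unfolding is_clique_def S'_def by blast
    moreover have "insert i K' \<subseteq> S" using K'(1) i unfolding S'_def by auto
    ultimately show ?thesis
      using K'(3) j by (intro exI[of _ "insert i K'"]) (simp add: g_aux_step)
  qed
qed

lemma clique_number_ge_h:
  assumes "realization pi E" "sorted pi"
  shows "h pi \<le> clique_number (length pi) E"
proof -
  obtain K where "K \<subseteq> {0..<length pi}" "is_clique E K" "g_aux (compl_seq pi) 0 \<le> card K"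
    using greedy_clique[OF assms, of "{0..<length pi}" 0] by force
  then show ?thesis unfolding h_def g_def using card_le_clique_number by (blast intro: le_trans)
qed

section \<open>Monotonicity of h\<close>

text \<open>On termwise smaller sorted sequences the greedy walk takes shorter jumps, so a walk
  starting behind the other one stays behind and visits at least as many indices.\<close>
lemma g_aux_antimono:
  assumes len: "length e' = length e" and le: "\<forall>i<length e. e' ! i \<le> e ! i"
    and sorted: "sorted e'"
  shows "j \<le> j' \<Longrightarrow> g_aux e j' \<le> g_aux e' j"
proof (induction "length e - j'" arbitrary: j j' rule: less_induct)
  case less
  show ?case
  proof (cases "j' < length e")
    case False
    then show ?thesis by (simp add: g_aux_stop)
  next
    case True
    have "e' ! j \<le> e' ! j'" using sorted len True less.prems by (simp add: sorted_nth_mono)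
    also have "\<dots> \<le> e ! j'" using le True by simp
    finally have "j + e' ! j + 1 \<le> j' + e ! j' + 1" using less.prems by simp
    then have "g_aux e (j' + e ! j' + 1) \<le> g_aux e' (j + e' ! j + 1)"
      using less.hyps True by simp
    then show ?thesis using True less.prems len by (simp add: g_aux_step)
  qed
qed

text \<open>Part (ii): raising pi termwise lowers compl_seq pi termwise and so raises h.\<close>
lemma h_mono:
  assumes "sorted pi'" "length pi' = length pi" "list_all2 (\<le>) pi pi'"
  shows "h pi \<le> h pi'"
proof -
  let ?n = "length pi"
  have "\<forall>i<?n. compl_seq pi' ! i \<le> compl_seq pi ! i"
  proof (intro allI impI)
    fix i assume i: "i < ?n"
    have "pi ! (?n - 1 - i) \<le> pi' ! (?n - 1 - i)"
      using assms(3) i by (auto simp: list_all2_conv_all_nth)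
    then show "compl_seq pi' ! i \<le> compl_seq pi ! i" using assms(2) i by (simp add: compl_seq_nth)
  qed
  then show ?thesis
    unfolding h_def g_def using assms(1,2)
    by (intro g_aux_antimono) (auto intro: compl_seq_sorted)
qed

section \<open>Lists of part sizes\<close>

text \<open>A list L of part sizes cuts the positions 0..<sum_list L into consecutive intervals;
  part_index L t is the index of the part containing position t and part_size L t its size.\<close>

fun part_index :: "nat list \<Rightarrow> nat \<Rightarrow> nat" where
  "part_index [] t = 0"
| "part_index (s # L) t = (if t < s then 0 else Suc (part_index L (t - s)))"

fun part_size :: "nat list \<Rightarrow> nat \<Rightarrow> nat" where
  "part_size [] t = 0"
| "part_size (s # L) t = (if t < s then s else part_size L (t - s))"

lemma part_index_lt: "t < sum_list L \<Longrightarrow> part_index L t < length L"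
  by (induction L arbitrary: t) auto

lemma part_size_in_set: "t < sum_list L \<Longrightarrow> part_size L t \<in> set L"
  by (induction L arbitrary: t) auto

lemma part_index_onto:
  "i < length L \<Longrightarrow> \<forall>x\<in>set L. 0 < x \<Longrightarrow> \<exists>t<sum_list L. part_index L t = i"
proof (induction L arbitrary: i)
  case (Cons s L)
  show ?case
  proof (cases i)
    case 0
    then show ?thesis using Cons.prems(2) by (intro exI[of _ 0]) auto
  next
    case (Suc i')
    then obtain t where "t < sum_list L" "part_index L t = i'" using Cons by auto
    then show ?thesis using Suc by (intro exI[of _ "t + s"]) auto
  qed
qed simp

lemma card_part:
  "t < sum_list L \<Longrightarrow> card {u. u < sum_list L \<and> part_index L u = part_index L t} = part_size L t"
proof (induction L arbitrary: t)
  case (Cons s L)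
  show ?case
  proof (cases "t < s")
    case True
    then have "{u. u < sum_list (s # L) \<and> part_index (s # L) u = part_index (s # L) t} = {..<s}"
      by auto
    then show ?thesis using True by simp
  next
    case False
    let ?P = "{u. u < sum_list L \<and> part_index L u = part_index L (t - s)}"
    have "{u. u < sum_list (s # L) \<and> part_index (s # L) u = part_index (s # L) t}
        = (\<lambda>u. u + s) ` ?P"
    proof (intro set_eqI iffI)
      fix u assume "u \<in> {u. u < sum_list (s # L) \<and> part_index (s # L) u = part_index (s # L) t}"
      then show "u \<in> (\<lambda>u. u + s) ` ?P"
        using False by (intro image_eqI[of _ _ "u - s"]) (auto split: if_splits)
    qed (use False in auto)
    moreover have "card ((\<lambda>u. u + s) ` ?P) = card ?P" by (rule card_image) (auto simp: inj_on_def)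
    ultimately show ?thesis using Cons False by simp
  qed
qed simp

lemma part_size_mono:
  "sorted L \<Longrightarrow> t \<le> t' \<Longrightarrow> t' < sum_list L \<Longrightarrow> part_size L t \<le> part_size L t'"
proof (induction L arbitrary: t t')
  case (Cons s L)
  show ?case
  proof (cases "t < s \<and> \<not> t' < s")
    case True
    then have "part_size L (t' - s) \<in> set L" using Cons.prems(3) by (intro part_size_in_set) auto
    then show ?thesis using True Cons.prems(1) by auto
  qed (use Cons in auto)
qed simp

lemma card_part_reversed:
  assumes sum: "sum_list L = n" and v: "v < n"
  shows "card {u. u < n \<and> part_index L (n - 1 - u) = part_index L (n - 1 - v)}
    = part_size L (n - 1 - v)"
proof -
  let ?P = "{t. t < n \<and> part_index L t = part_index L (n - 1 - v)}"
  have "{u. u < n \<and> part_index L (n - 1 - u) = part_index L (n - 1 - v)} = (\<lambda>t. n - 1 - t) ` ?P"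
  proof (intro set_eqI iffI)
    fix u assume "u \<in> {u. u < n \<and> part_index L (n - 1 - u) = part_index L (n - 1 - v)}"
    then show "u \<in> (\<lambda>t. n - 1 - t) ` ?P" by (intro image_eqI[of _ _ "n - 1 - u"]) auto
  qed auto
  moreover have "inj_on (\<lambda>t. n - 1 - t) ?P" by (auto simp: inj_on_def)
  ultimately have "card {u. u < n \<and> part_index L (n - 1 - u) = part_index L (n - 1 - v)} = card ?P"
    by (simp add: card_image)
  also have "\<dots> = part_size L (n - 1 - v)" using card_part[of "n - 1 - v" L] sum v by simp
  finally show ?thesis .
qed

lemma multipartite_realization:
  assumes sorted: "sorted L" and pos: "\<forall>x\<in>set L. 0 < x" and sum: "sum_list L = n"
  defines "E \<equiv> \<lambda>u v. u < n \<and> v < n \<and> part_index L (n - 1 - u) \<noteq> part_index L (n - 1 - v)"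
    and "pi' \<equiv> map (\<lambda>v. n - part_size L (n - 1 - v)) [0..<n]"
  shows "graphical pi'" "realization pi' E" "complete_multipartite n E (length L)"
proof -
  define p where "p v = part_index L (n - 1 - v)" for v
  have E_p: "E u v \<longleftrightarrow> u < n \<and> v < n \<and> p u \<noteq> p v" for u v by (simp add: E_def p_def)
  have len: "length pi' = n" by (simp add: pi'_def)
  have pi'_nth: "pi' ! v = n - part_size L (n - 1 - v)" if "v < n" for v
    using that by (simp add: pi'_def)
  have part_card: "card {u. u < n \<and> p u = p v} = part_size L (n - 1 - v)" if "v < n" for v
    using card_part_reversed[OF sum that] by (simp add: p_def)
  have "deg n E v = pi' ! v" if v: "v < n" for v
  proof -
    have "{u. u < n \<and> E v u} = {0..<n} - {u. u < n \<and> p u = p v}" using v by (auto simp: E_p)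
    then have "deg n E v = n - card {u. u < n \<and> p u = p v}"
      unfolding deg_def by (simp add: card_Diff_subset[of "{u. u < n \<and> p u = p v}"] subset_eq)
    then show ?thesis using part_card[OF v] pi'_nth[OF v] by simp
  qed
  then show real: "realization pi' E"
    unfolding realization_def simple_graph_def len by (auto simp: E_p)
  have "sorted pi'"
    unfolding sorted_iff_nth_mono len
    using sum by (auto simp: pi'_nth intro!: diff_le_mono2 part_size_mono[OF sorted])
  then show "graphical pi'" unfolding graphical_def using real by blast
  show "complete_multipartite n E (length L)"
    unfolding complete_multipartite_def
  proof (intro exI[of _ p] conjI allI impI)
    fix v assume "v < n"
    then show "p v < length L" using sum part_index_lt[of "n - 1 - v" L] by (simp add: p_def)
  next
    fix i assume "i < length L"
    then obtain t where "t < n" "part_index L t = i" using part_index_onto pos sum by blast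
    then show "\<exists>v<n. p v = i" by (intro exI[of _ "n - 1 - t"]) (auto simp: p_def)
  qed (simp add: E_p)
qed

section \<open>Murphy's partition of the positions\<close>

text \<open>fits f a L: the parts of L, laid out consecutively from position a, each have size at
  most f (start of the part) + 1.\<close>
fun fits :: "(nat \<Rightarrow> nat) \<Rightarrow> nat \<Rightarrow> nat list \<Rightarrow> bool" where
  "fits f a [] = True"
| "fits f a (x # xs) = (x \<le> f a + 1 \<and> fits f (a + x) xs)"

lemma fits_snoc: "fits f a (xs @ [r]) \<Longrightarrow> fits f a xs \<and> r \<le> f (a + sum_list xs) + 1"
proof (induction xs arbitrary: a)
  case (Cons x xs)
  then have "r \<le> f (a + x + sum_list xs) + 1" by auto
  then show ?case using Cons by (auto simp: add.assoc)
qed simp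

lemma fits_later_start: "mono f \<Longrightarrow> fits f a xs \<Longrightarrow> a \<le> b \<Longrightarrow> fits f b xs"
  by (induction xs arbitrary: a b) (auto dest: monoD)

text \<open>For a monotone bound, a part that fits at the end may be moved to any earlier slot.\<close>
lemma fits_insort:
  assumes "mono f"
  shows "fits f a xs \<Longrightarrow> r \<le> f (a + sum_list xs) + 1 \<Longrightarrow> fits f a (insort r xs)"
proof (induction xs arbitrary: a)
  case (Cons x xs)
  show ?case
  proof (cases "r \<le> x")
    case True
    have "f a \<le> f (a + r)" using monoD[OF assms] by simp
    moreover have "fits f (a + r + x) xs" using Cons.prems(1) assms by (auto intro: fits_later_start)
    ultimately show ?thesis using True Cons.prems(1) by auto
  next
    case False
    then show ?thesis using Cons by (auto simp: add.assoc)
  qed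
qed simp

lemma part_size_fits:
  "fits f a L \<Longrightarrow> mono f \<Longrightarrow> t < sum_list L \<Longrightarrow> part_size L t \<le> f (a + t) + 1"
proof (induction L arbitrary: a t)
  case (Cons s L)
  show ?case
  proof (cases "t < s")
    case True
    then show ?thesis using Cons.prems monoD[OF Cons.prems(2), of a "a + t"] by auto
  next
    case False
    then show ?thesis using Cons.IH[of "a + s" "t - s"] Cons.prems by auto
  qed
qed simp

lemma sum_list_insort: "sum_list (insort (x::nat) xs) = x + sum_list xs"
  by (induction xs) (auto simp: add.left_commute)

text \<open>If all parts but the last are already in increasing order, the parts can be sorted
  without violating a monotone bound: the last part is inserted at its place.\<close>
lemma sort_fitting_parts:
  assumes mono: "mono f" and fits: "fits f a B" and sorted: "sorted (butlast B)"
  shows "\<exists>L. length L = length B \<and> sum_list L = sum_list B \<and> set L = set B \<and> sorted L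
           \<and> fits f a L"
proof (cases "B = []")
  case False
  then have B_snoc: "B = butlast B @ [last B]" by simp
  then have "fits f a (butlast B)" "last B \<le> f (a + sum_list (butlast B)) + 1"
    using fits fits_snoc by metis+
  then have "fits f a (insort (last B) (butlast B))" by (rule fits_insort[OF mono])
  moreover have "sum_list B = last B + sum_list (butlast B)"
    "set B = insert (last B) (set (butlast B))" "length B = Suc (length (butlast B))"
    by (subst B_snoc; simp)+
  ultimately show ?thesis
    using sorted by (intro exI[of _ "insort (last B) (butlast B)"])
      (simp add: sum_list_insort set_insort_key sorted_insort)
qed (use fits in auto)

function blocks :: "nat list \<Rightarrow> nat \<Rightarrow> nat list" where
  "blocks e j = (if j < length e then (if j + e ! j + 1 < length e
     then (e ! j + 1) # blocks e (j + e ! j + 1) else [length e - j]) else [])"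
  by auto
termination by (relation "measure (\<lambda>(e, j). length e - j)") auto

declare blocks.simps [simp del]

lemma blocks_cases:
  obtains (step) "j + e ! j + 1 < length e" "blocks e j = (e ! j + 1) # blocks e (j + e ! j + 1)"
  | (last) "j < length e" "length e \<le> j + e ! j + 1" "blocks e j = [length e - j]"
  | (stop) "length e \<le> j" "blocks e j = []"
  using that blocks.simps[of e j]
  by (cases "j < length e"; cases "j + e ! j + 1 < length e") (simp_all add: not_less)

lemma blocks_basic:
  "length (blocks e j) = g_aux e j \<and> sum_list (blocks e j) = length e - j
   \<and> (\<forall>x\<in>set (blocks e j). 0 < x)"
proof (induction e j rule: blocks.induct)
  case (1 e j)
  show ?case
  proof (cases e j rule: blocks_cases)
    case step
    then have "j < length e" by simp
    with step "1.IH" show ?thesis by (auto simp: g_aux_step)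
  next
    case last
    then show ?thesis by (simp add: g_aux_step g_aux_stop)
  next
    case stop
    then show ?thesis by (simp add: g_aux_stop)
  qed
qed

lemma blocks_fit: "\<forall>t<length e. f t = e ! t \<Longrightarrow> fits f j (blocks e j)"
proof (induction e j rule: blocks.induct)
  case (1 e j)
  show ?case
  proof (cases e j rule: blocks_cases)
    case step
    then show ?thesis using "1.IH" "1.prems" by simp
  qed (use "1.prems" in simp_all)
qed

lemma blocks_butlast_sorted:
  "sorted e \<Longrightarrow> sorted (butlast (blocks e j)) \<and> (\<forall>x\<in>set (butlast (blocks e j)). e ! j + 1 \<le> x)"
proof (induction e j rule: blocks.induct)
  case (1 e j)
  show ?case
  proof (cases e j rule: blocks_cases)
    case step
    let ?j = "j + e ! j + 1"
    have "blocks e ?j \<noteq> []" using step by (cases e ?j rule: blocks_cases) auto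
    moreover have "e ! j \<le> e ! ?j" using "1.prems" step by (simp add: sorted_nth_mono)
    moreover have "sorted (butlast (blocks e ?j)) \<and> (\<forall>x\<in>set (butlast (blocks e ?j)). e ! ?j + 1 \<le> x)"
      using "1.IH" "1.prems" step by simp
    ultimately show ?thesis using step(2) by (auto simp: butlast.simps)
  qed simp_all
qed

lemma murphy_partition:
  assumes sorted: "sorted e"
  shows "\<exists>L. length L = g e \<and> sum_list L = length e \<and> (\<forall>x\<in>set L. 0 < x) \<and> sorted L
           \<and> (\<forall>t<length e. part_size L t \<le> e ! t + 1)"
proof -
  define f where "f t = e ! (min t (length e - 1))" for t
  have mono: "mono f"
  proof (rule monoI)
    fix a b :: nat assume "a \<le> b"
    then show "f a \<le> f b"
      unfolding f_def using sorted
      by (cases "e = []") (auto intro!: sorted_nth_mono simp: min_def le_diff_conv2 Suc_le_eq)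
  qed
  have f_e: "\<forall>t<length e. f t = e ! t" unfolding f_def by auto
  define B where "B = blocks e 0"
  have B: "length B = g e" "sum_list B = length e" "\<forall>x\<in>set B. 0 < x" "fits f 0 B"
    "sorted (butlast B)"
    using blocks_basic blocks_fit[OF f_e] blocks_butlast_sorted[OF sorted]
    unfolding B_def g_def by auto
  obtain L where L: "length L = g e" "sum_list L = length e" "\<forall>x\<in>set L. 0 < x" "sorted L"
    "fits f 0 L"
    using sort_fitting_parts[OF mono B(4,5)] B(1-3) by metis
  have "part_size L t \<le> e ! t + 1" if "t < length e" for t
    using part_size_fits[OF L(5) mono, of t] that L(2) f_e by simp
  then show ?thesis using L(1-4) by blast
qed

section \<open>The extremal complete h-partite realization\<close>

text \<open>Vertex v
  sits at position n-1-v, where compl_seq pi has the entry n-1-pi!v, so its part has size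
  at most n - pi!v and its degree is at least pi!v.\<close>
lemma multipartite_domination:
  assumes G: "graphical pi"
  shows "\<exists>pi' E. graphical pi' \<and> length pi' = length pi \<and> list_all2 (\<le>) pi pi'
            \<and> realization pi' E \<and> complete_multipartite (length pi) E (h pi)"
proof -
  let ?n = "length pi" and ?e = "compl_seq pi"
  obtain E0 where R0: "realization pi E0" and sorted: "sorted pi"
    using G by (auto simp: graphical_def)
  obtain L where L: "length L = h pi" "sum_list L = ?n" "\<forall>x\<in>set L. 0 < x" "sorted L"
    "\<forall>t<?n. part_size L t \<le> ?e ! t + 1"
    using murphy_partition[OF compl_seq_sorted[OF sorted]] unfolding h_def by auto
  define pi' where "pi' = map (\<lambda>v. ?n - part_size L (?n - 1 - v)) [0..<?n]"
  define E where "E = (\<lambda>u v. u < ?n \<and> v < ?n \<and> part_index L (?n - 1 - u) \<noteq> part_index L (?n - 1 - v))"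
  have mp: "graphical pi'" "realization pi' E" "complete_multipartite ?n E (h pi)"
    using multipartite_realization[OF L(4,3,2)] L(1) unfolding pi'_def E_def by simp_all
  have "pi ! v \<le> pi' ! v" if v: "v < ?n" for v
  proof -
    have "part_size L (?n - 1 - v) \<le> ?e ! (?n - 1 - v) + 1" using L(5) v by simp
    also have "\<dots> = ?n - pi ! v"
      using v realization_degree_le[OF R0 v] by (simp add: compl_seq_nth)
    finally show ?thesis using v realization_degree_le[OF R0 v] by (simp add: pi'_def)
  qed
  then have "list_all2 (\<le>) pi pi'" by (simp add: list_all2_conv_all_nth pi'_def)
  then show ?thesis using mp by (auto simp: pi'_def)
qed

theorem mainTheorem9:
  fixes pi :: "nat list"
  assumes "graphical pi"
  shows "(\<forall>E. realization pi E \<longrightarrow>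
            chromatic_number (length pi) E \<ge> clique_number (length pi) E \<and>
            clique_number (length pi) E \<ge> h pi)
       \<and> (\<forall>pi'. graphical pi' \<and> length pi' = length pi \<and> list_all2 (\<le>) pi pi'
            \<longrightarrow> h pi \<le> h pi')
       \<and> (\<exists>pi' E. graphical pi' \<and> length pi' = length pi \<and> list_all2 (\<le>) pi pi'
            \<and> realization pi' E \<and> complete_multipartite (length pi) E (h pi)
            \<and> clique_number (length pi) E = h pi
            \<and> chromatic_number (length pi) E = h pi)"
proof (intro conjI allI impI)
  have sorted: "sorted pi" using assms by (simp add: graphical_def)
  fix E assume R: "realization pi E"
  show "clique_number (length pi) E \<le> chromatic_number (length pi) E"
    using clique_number_le_chromatic[OF realization_identity_colouring[OF R]] .
  show "h pi \<le> clique_number (length pi) E" using clique_number_ge_h[OF R sorted] .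
next
  fix pi' assume "graphical pi' \<and> length pi' = length pi \<and> list_all2 (\<le>) pi pi'"
  then show "h pi \<le> h pi'" by (intro h_mono) (auto simp: graphical_def)
next
  show "\<exists>pi' E. graphical pi' \<and> length pi' = length pi \<and> list_all2 (\<le>) pi pi'
            \<and> realization pi' E \<and> complete_multipartite (length pi) E (h pi)
            \<and> clique_number (length pi) E = h pi \<and> chromatic_number (length pi) E = h pi"
    using multipartite_domination[OF assms] complete_multipartite_numbers by blast
qed

end
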